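(* Let $\ket{\phi}$ be a state on $n/2$ qubits (indexed by $[n/2]$) which is at least $\epsilon$-far from every separable state along any internal cut, and let $t$ be even. Then $$\Delta_{\phi,t}:=\sum_{\substack{S\subseteq[n/2]\\ 1\notin S,\ S\ne\emptyset}}\mathrm{Tr}[\phi_S^2]^{t/2}\le 2^{n/2}(1-\epsilon^2)^{t/2}.$$ In particular, a choice of $t=O(n/\epsilon^2)$ makes $\Delta_{\phi,t}$ negligible in $n$.
   Context: $\phi_S$ denotes the reduced density matrix of $\ket{\phi}$ on the qubits in $S$. "$\epsilon$-far from every separable state along any internal cut" means: for every nonempty proper $A\subsetneq[n/2]$ and all states $\ket{a}_A,\ket{b}_{[n/2]\setminus A}$, $|\langle\phi|(\ket{a}_A\otimes\ket{b}_{[n/2]\setminus A})|^2\le1-\epsilon^2$. Negligible means smaller than any inverse polynomial in $n$ for large $n$. *)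

theory Defs
  imports Complex_Main
begin

text \<open>A computational basis state of the
  qubits in Q is identified with the subset x of Q of qubits in state 1; a state is a
  complex amplitude function on Pow Q (values outside Pow Q are irrelevant).\<close>

definition is_state :: "nat set \<Rightarrow> (nat set \<Rightarrow> complex) \<Rightarrow> bool" where
  "is_state Q \<psi> \<longleftrightarrow> (\<Sum>x\<in>Pow Q. (cmod (\<psi> x))^2) = 1"

definition braket :: "nat set \<Rightarrow> (nat set \<Rightarrow> complex) \<Rightarrow> (nat set \<Rightarrow> complex) \<Rightarrow> complex" where
  "braket Q \<phi> \<psi> = (\<Sum>x\<in>Pow Q. cnj (\<phi> x) * \<psi> x)"

definition prod_state :: "nat set \<Rightarrow> (nat set \<Rightarrow> complex) \<Rightarrow> (nat set \<Rightarrow> complex) \<Rightarrow> nat set \<Rightarrow> complex" where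
  "prod_state A a b x = a (x \<inter> A) * b (x - A)"

definition rdm :: "nat set \<Rightarrow> nat set \<Rightarrow> (nat set \<Rightarrow> complex) \<Rightarrow> nat set \<Rightarrow> nat set \<Rightarrow> complex" where
  "rdm Q S \<phi> a b = (\<Sum>c\<in>Pow (Q - S). \<phi> (a \<union> c) * cnj (\<phi> (b \<union> c)))"

definition purity :: "nat set \<Rightarrow> nat set \<Rightarrow> (nat set \<Rightarrow> complex) \<Rightarrow> complex" where
  "purity Q S \<phi> = (\<Sum>a\<in>Pow S. \<Sum>b\<in>Pow S. rdm Q S \<phi> a b * rdm Q S \<phi> b a)"

definition far_from_separable :: "nat set \<Rightarrow> real \<Rightarrow> (nat set \<Rightarrow> complex) \<Rightarrow> bool" where
  "far_from_separable Q \<epsilon> \<phi> \<longleftrightarrow>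
     (\<forall>A. A \<noteq> {} \<and> A \<subset> Q \<longrightarrow>
        (\<forall>a b. is_state A a \<and> is_state (Q - A) b \<longrightarrow>
           (cmod (braket Q \<phi> (prod_state A a b)))^2 \<le> 1 - \<epsilon>^2))"

definition Delta :: "nat set \<Rightarrow> (nat set \<Rightarrow> complex) \<Rightarrow> nat \<Rightarrow> real" where
  "Delta Q \<phi> t = (\<Sum>S\<in>{S. S \<subseteq> Q \<and> 1 \<notin> S \<and> S \<noteq> {}}. (Re (purity Q S \<phi>)) ^ (t div 2))"

end

theory Submission
  imports Defs
begin

text \<open>Then Tr[\<phi>_S^2] is the sum of the
  squared norms of the contractions of \<phi>, on the qubits S, against its own slices
  \<phi>(\<cdot> \<union> c) with c \<subseteq> Q - S. Being \<epsilon>-far from product states across the cut S implies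
  that contracting \<phi> against any u on S shrinks squared norms by the factor 1 - \<epsilon>^2:
  otherwise the normalized u together with the normalized conjugate of the contraction
  would be a product state with too large an overlap with \<phi>. As the squared norms of
  the slices add up to 1, Tr[\<phi>_S^2] \<le> 1 - \<epsilon>^2 for each of the at most 2^(n/2) sets S
  in \<Delta>; finally (1 - \<epsilon>^2)^(t/2) \<le> exp(-\<epsilon>^2 t/2) \<le> exp(-n) once t/2 \<ge> n/\<epsilon>^2.\<close>

definition partial_braket ::
    "nat set \<Rightarrow> (nat set \<Rightarrow> complex) \<Rightarrow> (nat set \<Rightarrow> complex) \<Rightarrow> nat set \<Rightarrow> complex" where
  "partial_braket S \<phi> u d = (\<Sum>a\<in>Pow S. cnj (\<phi> (a \<union> d)) * u a)"

lemma sum_Pow_split: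
  assumes "S \<subseteq> Q"
  shows "(\<Sum>x\<in>Pow Q. f x) = (\<Sum>a\<in>Pow S. \<Sum>c\<in>Pow (Q - S). f (a \<union> c))"
proof -
  have "bij_betw (\<lambda>(a, c). a \<union> c) (Pow S \<times> Pow (Q - S)) (Pow Q)"
  proof (rule bij_betw_byWitness[where f' = "\<lambda>x. (x \<inter> S, x - S)"])
  qed (use assms in auto)
  then have "(\<Sum>x\<in>Pow Q. f x) = (\<Sum>(a, c)\<in>Pow S \<times> Pow (Q - S). f (a \<union> c))"
    by (simp add: sum.reindex_bij_betw[symmetric] case_prod_unfold)
  then show ?thesis
    by (simp add: sum.cartesian_product)
qed

lemma is_state_normalize:
  assumes "finite A" and pos: "(\<Sum>x\<in>Pow A. (cmod (u x))^2) > 0"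
  shows "is_state A (\<lambda>x. u x / of_real (sqrt (\<Sum>y\<in>Pow A. (cmod (u y))^2)))"
proof -
  let ?N2 = "\<Sum>y\<in>Pow A. (cmod (u y))^2"
  have "(\<Sum>x\<in>Pow A. (cmod (u x / of_real (sqrt ?N2)))^2) = (\<Sum>x\<in>Pow A. (cmod (u x))^2 / ?N2)"
    using pos by (simp add: norm_divide power_divide)
  also have "\<dots> = 1"
    using pos by (simp add: sum_divide_distrib[symmetric])
  finally show ?thesis
    unfolding is_state_def .
qed

lemma braket_prod_state:
  assumes "S \<subseteq> Q"
  shows "braket Q \<phi> (prod_state S u v) = (\<Sum>d\<in>Pow (Q - S). v d * partial_braket S \<phi> u d)"
proof -
  have "braket Q \<phi> (prod_state S u v)
      = (\<Sum>a\<in>Pow S. \<Sum>d\<in>Pow (Q - S). cnj (\<phi> (a \<union> d)) * (u ((a \<union> d) \<inter> S) * v ((a \<union> d) - S)))"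
    unfolding braket_def prod_state_def by (rule sum_Pow_split[OF assms])
  also have "\<dots> = (\<Sum>a\<in>Pow S. \<Sum>d\<in>Pow (Q - S). v d * (cnj (\<phi> (a \<union> d)) * u a))"
  proof (intro sum.cong refl)
    fix a d
    assume "a \<in> Pow S" "d \<in> Pow (Q - S)"
    then have "(a \<union> d) \<inter> S = a" "(a \<union> d) - S = d"
      by auto
    then show "cnj (\<phi> (a \<union> d)) * (u ((a \<union> d) \<inter> S) * v ((a \<union> d) - S))
        = v d * (cnj (\<phi> (a \<union> d)) * u a)"
      by (simp add: mult_ac)
  qed
  also have "\<dots> = (\<Sum>d\<in>Pow (Q - S). v d * partial_braket S \<phi> u d)"
    by (subst sum.swap) (simp add: partial_braket_def sum_distrib_left)
  finally show ?thesis .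
qed

lemma braket_prod_state_normalized_contraction:
  assumes "S \<subseteq> Q" "N > 0" "W > 0"
    and W: "W^2 = (\<Sum>d\<in>Pow (Q - S). (cmod (partial_braket S \<phi> u d))^2)"
  shows "braket Q \<phi> (prod_state S (\<lambda>x. u x / of_real N)
      (\<lambda>d. cnj (partial_braket S \<phi> u d) / of_real W)) = of_real (W / N)"
proof -
  let ?w = "partial_braket S \<phi> u"
  have "cnj (?w d) / of_real W * partial_braket S \<phi> (\<lambda>x. u x / of_real N) d
      = of_real ((cmod (?w d))^2 / (W * N))" for d
  proof -
    have "partial_braket S \<phi> (\<lambda>x. u x / of_real N) d = ?w d / of_real N"
      unfolding partial_braket_def by (simp add: sum_divide_distrib)
    then show ?thesis
      by (simp add: complex_norm_square mult.commute del: of_real_power)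
  qed
  then have "braket Q \<phi> (prod_state S (\<lambda>x. u x / of_real N) (\<lambda>d. cnj (?w d) / of_real W))
      = (\<Sum>d\<in>Pow (Q - S). of_real ((cmod (?w d))^2 / (W * N)))"
    using braket_prod_state[OF assms(1)] by simp
  also have "\<dots> = of_real (W^2 / (W * N))"
    unfolding W by (simp add: sum_divide_distrib)
  also have "\<dots> = of_real (W / N)"
    using \<open>W > 0\<close> by (simp add: power2_eq_square)
  finally show ?thesis .
qed

lemma norm_partial_braket_le:
  assumes "finite Q" "S \<noteq> {}" "S \<subset> Q"
    and far: "far_from_separable Q \<epsilon> \<phi>" and "\<epsilon>^2 \<le> 1"
  shows "(\<Sum>d\<in>Pow (Q - S). (cmod (partial_braket S \<phi> u d))^2)
          \<le> (1 - \<epsilon>^2) * (\<Sum>a\<in>Pow S. (cmod (u a))^2)"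
proof -
  define w where "w = partial_braket S \<phi> u"
  define W2 where "W2 = (\<Sum>d\<in>Pow (Q - S). (cmod (w d))^2)"
  define N2 where "N2 = (\<Sum>a\<in>Pow S. (cmod (u a))^2)"
  have finS: "finite S"
    using assms(1,3) finite_subset by blast
  have "N2 \<ge> 0" "W2 \<ge> 0"
    unfolding N2_def W2_def by (auto intro: sum_nonneg)
  consider "W2 = 0" | "N2 > 0" "W2 > 0"
  proof (cases "N2 = 0")
    case True
    then have "u a = 0" if "a \<in> Pow S" for a
      using that finS unfolding N2_def by (simp add: sum_nonneg_eq_0_iff)
    then have "W2 = 0"
      unfolding W2_def w_def partial_braket_def by simp
    then show ?thesis ..
  qed (use \<open>N2 \<ge> 0\<close> \<open>W2 \<ge> 0\<close> in fastforce)
  then have "W2 \<le> (1 - \<epsilon>^2) * N2"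
  proof cases
    case 1
    then show ?thesis
      using \<open>N2 \<ge> 0\<close> assms(5) by simp
  next
    case 2
    define a where "a x = u x / of_real (sqrt N2)" for x
    define b where "b d = cnj (w d) / of_real (sqrt W2)" for d
    have "is_state S a"
      using is_state_normalize[OF finS] 2(1) unfolding a_def N2_def by blast
    moreover have "is_state (Q - S) b"
      using is_state_normalize[of "Q - S" "\<lambda>d. cnj (w d)"] 2(2) assms(1)
      unfolding b_def W2_def by simp
    ultimately have "(cmod (braket Q \<phi> (prod_state S a b)))^2 \<le> 1 - \<epsilon>^2"
      using far assms(2,3) unfolding far_from_separable_def by blast
    moreover have "braket Q \<phi> (prod_state S a b) = of_real (sqrt W2 / sqrt N2)"
      unfolding a_def b_def w_def using 2 assms(3)
      by (intro braket_prod_state_normalized_contraction) (auto simp: W2_def w_def)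
    ultimately have "W2 / N2 \<le> 1 - \<epsilon>^2"
      using 2 by (simp add: norm_divide power_divide)
    then show ?thesis
      using 2 by (simp add: field_simps)
  qed
  then show ?thesis
    unfolding W2_def N2_def w_def .
qed

lemma purity_eq_sum_norm_partial_braket:
  "purity Q S \<phi> = of_real (\<Sum>c\<in>Pow (Q - S). \<Sum>d\<in>Pow (Q - S).
      (cmod (partial_braket S \<phi> (\<lambda>a. \<phi> (a \<union> c)) d))^2)"
proof -
  let ?G = "\<lambda>c d. partial_braket S \<phi> (\<lambda>a. \<phi> (a \<union> c)) d"
  have "purity Q S \<phi> = (\<Sum>c\<in>Pow (Q - S). \<Sum>d\<in>Pow (Q - S). \<Sum>a\<in>Pow S. \<Sum>b\<in>Pow S.
      (\<phi> (a \<union> c) * cnj (\<phi> (a \<union> d))) * (\<phi> (b \<union> d) * cnj (\<phi> (b \<union> c))))"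
    unfolding purity_def rdm_def sum_product
    by (subst sum.swap, subst (2 4) sum.swap, subst (3) sum.swap) (simp add: mult_ac)
  also have "\<dots> = (\<Sum>c\<in>Pow (Q - S). \<Sum>d\<in>Pow (Q - S). ?G c d * cnj (?G c d))"
    by (simp add: partial_braket_def sum_product mult_ac)
  also have "\<dots> = of_real (\<Sum>c\<in>Pow (Q - S). \<Sum>d\<in>Pow (Q - S). (cmod (?G c d))^2)"
    by (simp add: complex_norm_square del: of_real_power)
  finally show ?thesis .
qed

lemma purity_le:
  assumes "finite Q" "S \<noteq> {}" "S \<subset> Q"
    and "far_from_separable Q \<epsilon> \<phi>" "\<epsilon>^2 \<le> 1" and "is_state Q \<phi>"
  shows "0 \<le> Re (purity Q S \<phi>)" "Re (purity Q S \<phi>) \<le> 1 - \<epsilon>^2"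
proof -
  let ?G = "\<lambda>c d. partial_braket S \<phi> (\<lambda>a. \<phi> (a \<union> c)) d"
  have purity: "Re (purity Q S \<phi>) = (\<Sum>c\<in>Pow (Q - S). \<Sum>d\<in>Pow (Q - S). (cmod (?G c d))^2)"
    by (simp add: purity_eq_sum_norm_partial_braket)
  then show "0 \<le> Re (purity Q S \<phi>)"
    by (simp add: sum_nonneg)
  have "Re (purity Q S \<phi>) \<le> (\<Sum>c\<in>Pow (Q - S). (1 - \<epsilon>^2) * (\<Sum>a\<in>Pow S. (cmod (\<phi> (a \<union> c)))^2))"
    unfolding purity using assms(1-5) by (intro sum_mono norm_partial_braket_le)
  also have "\<dots> = (1 - \<epsilon>^2) * (\<Sum>a\<in>Pow S. \<Sum>c\<in>Pow (Q - S). (cmod (\<phi> (a \<union> c)))^2)"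
    by (simp add: sum_distrib_left[symmetric] sum.swap[of _ "Pow (Q - S)"])
  also have "\<dots> = 1 - \<epsilon>^2"
    using assms(6) unfolding is_state_def sum_Pow_split[OF less_imp_le[OF assms(3)]] by simp
  finally show "Re (purity Q S \<phi>) \<le> 1 - \<epsilon>^2" .
qed

lemma Delta_le:
  assumes "\<epsilon>^2 \<le> 1" "is_state {1..m} \<phi>" "far_from_separable {1..m} \<epsilon> \<phi>"
  shows "Delta {1..m} \<phi> t \<le> 2 ^ m * (1 - \<epsilon>^2) ^ (t div 2)"
proof -
  define I where "I = {S. S \<subseteq> {1..m} \<and> 1 \<notin> S \<and> S \<noteq> {}}"
  have "card I \<le> card (Pow {1..m})"
    by (rule card_mono) (auto simp: I_def)
  then have card_I: "real (card I) \<le> 2 ^ m"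
    by (simp add: card_Pow flip: of_nat_le_iff)
  have "Re (purity {1..m} S \<phi>) ^ (t div 2) \<le> (1 - \<epsilon>^2) ^ (t div 2)" if "S \<in> I" for S
  proof (rule power_mono)
    have "S \<noteq> {}" "S \<subset> {1..m}"
      using that unfolding I_def by auto
    with assms show "Re (purity {1..m} S \<phi>) \<le> 1 - \<epsilon>^2" "0 \<le> Re (purity {1..m} S \<phi>)"
      using purity_le[of "{1..m}" S \<epsilon> \<phi>] by simp_all
  qed
  then have "Delta {1..m} \<phi> t \<le> (\<Sum>S\<in>I. (1 - \<epsilon>^2) ^ (t div 2))"
    unfolding Delta_def I_def[symmetric] by (rule sum_mono)
  also have "\<dots> = real (card I) * (1 - \<epsilon>^2) ^ (t div 2)"
    by simp
  also have "\<dots> \<le> 2 ^ m * (1 - \<epsilon>^2) ^ (t div 2)"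
    using card_I assms(1) by (intro mult_right_mono) simp_all
  finally show ?thesis .
qed

lemma one_minus_power_le_exp:
  fixes x :: real
  assumes "x \<le> 1"
  shows "(1 - x) ^ k \<le> exp (- (x * k))"
proof -
  have "(1 - x) ^ k \<le> exp (- x) ^ k"
    using assms exp_ge_add_one_self[of "- x"] by (intro power_mono) auto
  then show ?thesis
    by (simp add: exp_of_nat_mult[symmetric] mult_ac)
qed

lemma sqrt2_div_exp1_power:
  assumes "even n"
  shows "(sqrt 2 / exp 1) ^ n = 2 ^ (n div 2) * exp (- real n)"
proof -
  obtain m where "n = 2 * m"
    using assms by blast
  then have "sqrt 2 ^ n = 2 ^ (n div 2)"
    by (simp add: power_mult)
  then have "(sqrt 2 / exp 1) ^ n = 2 ^ (n div 2) / exp (real n)"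
    by (simp add: power_divide exp_of_nat_mult[symmetric])
  then show ?thesis
    by (simp add: exp_minus divide_inverse)
qed

theorem fact4p8:
  fixes n t :: nat and \<epsilon> :: real and \<phi> :: "nat set \<Rightarrow> complex"
  assumes "even n"
    and "0 \<le> \<epsilon>" and "\<epsilon> \<le> 1"
    and "is_state {1..n div 2} \<phi>"
    and "far_from_separable {1..n div 2} \<epsilon> \<phi>"
    and "even t"
  shows "Delta {1..n div 2} \<phi> t \<le> 2 ^ (n div 2) * (1 - \<epsilon>^2) ^ (t div 2)
    \<and> (0 < \<epsilon> \<and> real n / \<epsilon>^2 \<le> real (t div 2) \<longrightarrow>
         Delta {1..n div 2} \<phi> t \<le> (sqrt 2 / exp 1) ^ n)"
proof (intro conjI impI)
  have "\<epsilon>^2 \<le> 1"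
    using assms(2,3) by (simp add: power_le_one)
  then show Delta: "Delta {1..n div 2} \<phi> t \<le> 2 ^ (n div 2) * (1 - \<epsilon>^2) ^ (t div 2)"
    using Delta_le assms(4,5) by blast
  assume large_t: "0 < \<epsilon> \<and> real n / \<epsilon>^2 \<le> real (t div 2)"
  then have "0 < \<epsilon>^2"
    by simp
  with large_t have "real n \<le> \<epsilon>^2 * (t div 2)"
    by (metis pos_divide_le_eq mult.commute)
  have "(1 - \<epsilon>^2) ^ (t div 2) \<le> exp (- (\<epsilon>^2 * (t div 2)))"
    using \<open>\<epsilon>^2 \<le> 1\<close> by (rule one_minus_power_le_exp)
  also have "\<dots> \<le> exp (- real n)"
    using \<open>real n \<le> \<epsilon>^2 * (t div 2)\<close> by simp
  finally have "2 ^ (n div 2) * (1 - \<epsilon>^2) ^ (t div 2) \<le> (sqrt 2 / exp 1) ^ n"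
    unfolding sqrt2_div_exp1_power[OF assms(1)] by (rule mult_left_mono) simp
  with Delta show "Delta {1..n div 2} \<phi> t \<le> (sqrt 2 / exp 1) ^ n"
    by (rule order_trans)
qed

end
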